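(* Let $n, r, s, \ell$ be positive integers with $r+s+\ell\le n$, let $S_1\subseteq\cdots\subseteq S_{\ell+1}\subseteq\mathbb{Z}_2^n$ be subspaces with $\dim S_j=r+j-1$, and let $m\ge 1$. For every oracle-aided quantum algorithm making at most $q$ quantum queries, the distinguishing advantage between the following two oracle distributions is at most $O\!\left(\frac{q\cdot\ell\cdot m\cdot s}{\sqrt{2^{\,n-r-s-\ell}}}\right)$: (a) sample $(T_{i,1},\ldots,T_{i,\ell+1})\gets\mathcal{S}_s$ independently for each $i\in[m]$ and give access to $(\mathcal{O}_{T_{i,1}},\ldots,\mathcal{O}_{T_{i,\ell+1}})_{i\in[m]}$; (b) sample a single $(T_1,\ldots,T_{\ell+1})\gets\mathcal{S}_s$ and give access to $m$ copies $(\mathcal{O}_{T_1},\ldots,\mathcal{O}_{T_{\ell+1}})_{i\in[m]}$.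
   Context: All linear algebra is over $\mathbb{Z}_2$. Given the subspaces $S_1\subseteq\cdots\subseteq S_{\ell+1}$, the distribution $\mathcal{S}_s$ over tuples of subspaces is: pick $s$ uniformly random linearly independent vectors $\mathbf{v}_1,\ldots,\mathbf{v}_s\in\mathbb{Z}_2^n$ conditioned on $\mathrm{span}\{\mathbf{v}_1,\ldots,\mathbf{v}_s\}\cap S_{\ell+1}=\{0\}$, and set $T_j:=\mathrm{span}\{S_j,\mathbf{v}_1,\ldots,\mathbf{v}_s\}$ for all $j\in[\ell+1]$. For a subspace $S'\subseteq\mathbb{Z}_2^n$, $\mathcal{O}_{S'}$ is the membership oracle outputting $1$ iff its input lies in $S'$. *)

theory Defs
  imports "HOL-Library.Z2" "HOL-Library.Function_Algebras"
          "HOL-Probability.Probability_Mass_Function"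
begin

definition z2scale :: "bit \<Rightarrow> (nat \<Rightarrow> bit) \<Rightarrow> (nat \<Rightarrow> bit)" where
  "z2scale c v = (\<lambda>i. c * v i)"

global_interpretation z2: vector_space z2scale
  by unfold_locales (auto simp: z2scale_def fun_eq_iff algebra_simps)

definition Z2vecs :: "nat \<Rightarrow> (nat \<Rightarrow> bit) set" where
  "Z2vecs n = {v. \<forall>i\<ge>n. v i = 0}"

text \<open>Support of the uniform choice of (v_1,...,v_s): linearly independent
  (distinct, independent as a set) vectors of Z_2^n whose span meets S_(l+1)
  only in 0.\<close>
definition indep_tuples ::
  "nat \<Rightarrow> (nat \<Rightarrow> (nat \<Rightarrow> bit) set) \<Rightarrow> nat \<Rightarrow> nat \<Rightarrow> (nat \<Rightarrow> bit) list set" where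
  "indep_tuples n S l s = {vs. length vs = s \<and> distinct vs \<and> set vs \<subseteq> Z2vecs n \<and>
      z2.independent (set vs) \<and> z2.span (set vs) \<inter> S (l + 1) = {0}}"

definition Tsp :: "(nat \<Rightarrow> (nat \<Rightarrow> bit) set) \<Rightarrow> (nat \<Rightarrow> bit) list \<Rightarrow> nat \<Rightarrow> (nat \<Rightarrow> bit) set" where
  "Tsp S vs j = z2.span (S j \<union> set vs)"

text \<open>Basis labels: ((i,j), x, b, w): oracle index (i,j) with i < m, 1 <= j <= l+1,
  query input x in Z_2^n, answer bit b, workspace index w < W.\<close>
type_synonym label = "(nat \<times> nat) \<times> (nat \<Rightarrow> bit) \<times> bool \<times> nat"

definition qbasis :: "nat \<Rightarrow> nat \<Rightarrow> nat \<Rightarrow> nat \<Rightarrow> label set" where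
  "qbasis n m l W = {((i,j),x,b,w). i < m \<and> j \<in> {1..l+1} \<and> x \<in> Z2vecs n \<and> w < W}"

definition unitary_on :: "label set \<Rightarrow> (label \<Rightarrow> label \<Rightarrow> complex) \<Rightarrow> bool" where
  "unitary_on B U \<longleftrightarrow> (\<forall>x\<in>B. \<forall>y\<in>B.
      (\<Sum>z\<in>B. cnj (U z x) * U z y) = (if x = y then 1 else 0))"

definition apply_op :: "label set \<Rightarrow> (label \<Rightarrow> label \<Rightarrow> complex) \<Rightarrow> (label \<Rightarrow> complex) \<Rightarrow> (label \<Rightarrow> complex)" where
  "apply_op B U \<psi> = (\<lambda>y. \<Sum>x\<in>B. U y x * \<psi> x)"

definition oracle_op :: "(nat \<times> nat \<Rightarrow> (nat \<Rightarrow> bit) \<Rightarrow> bool) \<Rightarrow> (label \<Rightarrow> complex) \<Rightarrow> (label \<Rightarrow> complex)" where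
  "oracle_op f \<psi> = (\<lambda>(ij, x, b, w). \<psi> (ij, x, b \<noteq> f ij x, w))"

text \<open>Run U_0, O, U_1, O, ..., O, U_q: a list of q+1 unitaries gives q queries.\<close>
fun run :: "label set \<Rightarrow> (nat \<times> nat \<Rightarrow> (nat \<Rightarrow> bit) \<Rightarrow> bool) \<Rightarrow>
    (label \<Rightarrow> label \<Rightarrow> complex) list \<Rightarrow> (label \<Rightarrow> complex) \<Rightarrow> (label \<Rightarrow> complex)" where
  "run B f [] \<psi> = \<psi>"
| "run B f [U] \<psi> = apply_op B U \<psi>"
| "run B f (U # V # Us) \<psi> = run B f (V # Us) (oracle_op f (apply_op B U \<psi>))"

definition init_state :: "label \<Rightarrow> complex" where
  "init_state = (\<lambda>l. if l = ((0,1), 0, False, 0) then 1 else 0)"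

text \<open>Probability that the algorithm outputs 1: measure in the computational
  basis and output the answer bit b.\<close>
definition accept_prob :: "label set \<Rightarrow> (nat \<times> nat \<Rightarrow> (nat \<Rightarrow> bit) \<Rightarrow> bool) \<Rightarrow>
    (label \<Rightarrow> label \<Rightarrow> complex) list \<Rightarrow> real" where
  "accept_prob B f Us =
     (\<Sum>l\<in>B. if fst (snd (snd l)) then (cmod (run B f Us init_state l))\<^sup>2 else 0)"

text \<open>(a) independent samples for each i < m (uniform over m-lists of tuples
  = product of independent uniform samples).\<close>
definition prob_indep :: "nat \<Rightarrow> nat \<Rightarrow> nat \<Rightarrow> nat \<Rightarrow> nat \<Rightarrow> (nat \<Rightarrow> (nat \<Rightarrow> bit) set) \<Rightarrow>
     (label \<Rightarrow> label \<Rightarrow> complex) list \<Rightarrow> real" where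
  "prob_indep n m l s W S Us =
     measure_pmf.expectation
       (pmf_of_set {vss. length vss = m \<and> set vss \<subseteq> indep_tuples n S l s})
       (\<lambda>vss. accept_prob (qbasis n m l W) (\<lambda>(i,j) x. x \<in> Tsp S (vss ! i) j) Us)"

definition prob_copies :: "nat \<Rightarrow> nat \<Rightarrow> nat \<Rightarrow> nat \<Rightarrow> nat \<Rightarrow> (nat \<Rightarrow> (nat \<Rightarrow> bit) set) \<Rightarrow>
     (label \<Rightarrow> label \<Rightarrow> complex) list \<Rightarrow> real" where
  "prob_copies n m l s W S Us =
     measure_pmf.expectation
       (pmf_of_set (indep_tuples n S l s))
       (\<lambda>vs. accept_prob (qbasis n m l W) (\<lambda>(i,j) x. x \<in> Tsp S vs j) Us)"

end

theory Submission
  imports Defs "HOL-Analysis.L2_Norm"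
begin

(* Both distributions are compared with the fixed oracles O_{S_j}.  For a query input x, the
   oracles O_{T_j} and O_{S_j} disagree only if x lies outside S_{l+1} but inside
   span(S_{l+1}, v_1, ..., v_s).  Linear involutions of Z_2^n fixing S_{l+1} pointwise act
   transitively on the vectors outside S_{l+1} and preserve both distributions, so this
   happens with the same probability for every such x; double counting bounds it by
   2^(r+l+s) / 2^(n-1).  Averaging the squared one-query deviation over the distribution and
   applying Cauchy-Schwarz and the hybrid argument bounds the advantage against the fixed
   oracles by 4 q sqrt(2 / 2^(n-r-s-l)) for each of the two distributions. *)

section \<open>Linear algebra over Z_2\<close>

interpretation z2_bit: vector_space_pair z2scale "(*) :: bit \<Rightarrow> bit \<Rightarrow> bit"
  by unfold_locales (auto simp: algebra_simps)

lemma bit_add_self [simp]: "(c::bit) + c = 0"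
  by (cases c) auto

lemma bitvec_add_self [simp]: "(v::nat \<Rightarrow> bit) + v = 0"
  by (simp add: fun_eq_iff)

lemma Z2vecs_eq_image_Pow: "Z2vecs n = (\<lambda>A i. if i \<in> A then 1 else 0) ` Pow {..<n}"
proof safe
  fix v assume v: "v \<in> Z2vecs n"
  show "v \<in> (\<lambda>A i. if i \<in> A then 1 else 0) ` Pow {..<n}"
  proof (rule image_eqI[of _ _ "{i. i < n \<and> v i = 1}"])
    show "v = (\<lambda>i. if i \<in> {i. i < n \<and> v i = 1} then 1 else 0)"
      using v unfolding Z2vecs_def by (auto simp: fun_eq_iff)
  qed auto
qed (auto simp: Z2vecs_def)

lemma finite_Z2vecs: "finite (Z2vecs n)"
  unfolding Z2vecs_eq_image_Pow by simp

lemma card_Z2vecs: "card (Z2vecs n) = 2 ^ n"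
proof -
  have "inj_on (\<lambda>A i. if i \<in> A then (1::bit) else 0) (Pow {..<n})"
    by (rule inj_onI) (auto simp: fun_eq_iff split: if_splits; metis zero_neq_one)+
  then show ?thesis
    unfolding Z2vecs_eq_image_Pow by (simp add: card_image card_Pow)
qed

lemma subspace_Z2vecs: "z2.subspace (Z2vecs n)"
  unfolding z2.subspace_def Z2vecs_def by (auto simp: z2scale_def)

lemma span_subset_Z2vecs: "X \<subseteq> Z2vecs n \<Longrightarrow> z2.span X \<subseteq> Z2vecs n"
  by (rule z2.span_minimal[OF _ subspace_Z2vecs])

lemma span_insert_subset: "z2.span (insert a X) \<subseteq> z2.span X \<union> (\<lambda>y. a + y) ` z2.span X"
proof
  fix w assume "w \<in> z2.span (insert a X)"
  then obtain k where k: "w - z2scale k a \<in> z2.span X"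
    unfolding z2.span_insert by auto
  show "w \<in> z2.span X \<union> (\<lambda>y. a + y) ` z2.span X"
  proof (cases "k = 0")
    case True
    then show ?thesis using k by simp
  next
    case False
    then have "w - a \<in> z2.span X" using k by simp
    moreover have "w = a + (w - a)" by simp
    ultimately show ?thesis by blast
  qed
qed

lemma finite_span_card_le:
  assumes "finite X"
  shows "finite (z2.span X) \<and> card (z2.span X) \<le> 2 ^ card X"
  using assms
proof (induction X rule: finite_induct)
  case (insert a X)
  have fin: "finite (z2.span X \<union> (\<lambda>y. a + y) ` z2.span X)"
    using insert by simp
  have "card (z2.span X \<union> (\<lambda>y. a + y) ` z2.span X) \<le> 2 * card (z2.span X)"
    using card_Un_le[of "z2.span X" "(\<lambda>y. a + y) ` z2.span X"]
      card_image_le[of "z2.span X" "\<lambda>y. a + y"] insert by linarith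
  also have "\<dots> \<le> 2 ^ card (insert a X)"
    using insert by simp
  finally show ?case
    using span_insert_subset[of a X] fin by (meson card_mono finite_subset order_trans)
qed simp

lemma card_span_Un_le:
  assumes S: "z2.subspace S" "finite S" and X: "finite X"
  shows "card (z2.span (S \<union> X)) \<le> 2 ^ (z2.dim S + card X)"
proof -
  obtain B where B: "B \<subseteq> S" "z2.independent B" "S \<subseteq> z2.span B" "card B = z2.dim S"
    by (rule z2.basis_exists)
  have fin: "finite (B \<union> X)"
    using B(1) S(2) X finite_subset by blast
  have "S \<union> X \<subseteq> z2.span (B \<union> X)"
    using B(3) z2.span_mono[of B "B \<union> X"] z2.span_superset[of "B \<union> X"] by blast
  then have "z2.span (S \<union> X) \<subseteq> z2.span (B \<union> X)"
    by (simp add: z2.span_minimal)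
  then have "card (z2.span (S \<union> X)) \<le> card (z2.span (B \<union> X))"
    using finite_span_card_le[OF fin] by (simp add: card_mono)
  also have "\<dots> \<le> 2 ^ card (B \<union> X)"
    using finite_span_card_le[OF fin] by simp
  also have "\<dots> \<le> 2 ^ (z2.dim S + card X)"
    using card_Un_le[of B X] B(4) by (intro power_increasing) auto
  finally show ?thesis .
qed

lemma card_subspace_le:
  assumes "z2.subspace S" "finite S"
  shows "card S \<le> 2 ^ z2.dim S"
  using card_span_Un_le[OF assms, of "{}"] z2.span_eq_iff[THEN iffD2, OF assms(1)] by simp

lemma card_Z2vecs_Diff_subspace_ge:
  assumes "z2.subspace S" "S \<subseteq> Z2vecs n" "z2.dim S < n"
  shows "2 ^ (n - 1) \<le> card (Z2vecs n - S)"
proof -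
  have "card S \<le> 2 ^ z2.dim S"
    using assms(1) finite_subset[OF assms(2) finite_Z2vecs] by (rule card_subspace_le)
  also have "\<dots> \<le> 2 ^ (n - 1)"
    using assms(3) by (intro power_increasing) auto
  finally have "card S \<le> 2 ^ (n - 1)" .
  moreover have "(2::nat) ^ n = 2 * 2 ^ (n - 1)"
    using assms(3) by (cases n) auto
  ultimately show ?thesis
    using card_Diff_subset[OF finite_subset[OF assms(2) finite_Z2vecs] assms(2)] card_Z2vecs
    by simp
qed

lemma span_insert_inter_eq_zero:
  assumes "v \<notin> z2.span (S \<union> V)" "z2.span V \<inter> S = {0}"
  shows "z2.span (insert v V) \<inter> S = {0}"
proof -
  have "0 \<in> S"
    using assms(2) by blast
  moreover have "w = 0" if w: "w \<in> z2.span (insert v V)" "w \<in> S" for w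
  proof -
    obtain k where k: "w - z2scale k v \<in> z2.span V"
      using w(1) unfolding z2.span_insert by blast
    show "w = 0"
    proof (cases "k = 0")
      case True
      then have "w \<in> z2.span V \<inter> S"
        using k w(2) by simp
      then show ?thesis using assms(2) by blast
    next
      case False
      then have "w - v \<in> z2.span (S \<union> V)"
        using k z2.span_mono[of V "S \<union> V"] by auto
      moreover have "w \<in> z2.span (S \<union> V)"
        using w(2) z2.span_base by blast
      ultimately have "w - (w - v) \<in> z2.span (S \<union> V)"
        using z2.span_diff by blast
      then have "v \<in> z2.span (S \<union> V)"
        by (simp only: diff_diff_eq2 add_diff_cancel_left')
      with assms(1) show ?thesis by contradiction
    qed
  qed
  ultimately show ?thesis
    using z2.span_zero[of "insert v V"] by blast
qed

lemma finite_indep_tuples: "finite (indep_tuples n S l s)"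
proof -
  have "indep_tuples n S l s \<subseteq> {vs. set vs \<subseteq> Z2vecs n \<and> length vs = s}"
    unfolding indep_tuples_def by auto
  then show ?thesis
    using finite_lists_length_eq[OF finite_Z2vecs] finite_subset by blast
qed

lemma indep_tuple_extend:
  assumes S: "z2.subspace (S (l + 1))" "S (l + 1) \<subseteq> Z2vecs n"
    and k: "z2.dim (S (l + 1)) + k < n" and vs: "vs \<in> indep_tuples n S l k"
  obtains v where "v # vs \<in> indep_tuples n S l (Suc k)"
proof -
  let ?V = "z2.span (S (l + 1) \<union> set vs)"
  have vs': "length vs = k" "set vs \<subseteq> Z2vecs n" "z2.independent (set vs)"
      "z2.span (set vs) \<inter> S (l + 1) = {0}"
    using vs unfolding indep_tuples_def by auto
  have "card ?V \<le> 2 ^ (z2.dim (S (l + 1)) + card (set vs))"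
    using S finite_subset[OF S(2) finite_Z2vecs] by (intro card_span_Un_le) auto
  also have "\<dots> < card (Z2vecs n)"
    using card_length[of vs] vs'(1) k unfolding card_Z2vecs by (intro power_strict_increasing) auto
  finally have "\<not> Z2vecs n \<subseteq> ?V"
    using card_mono[OF finite_subset[OF span_subset_Z2vecs finite_Z2vecs]] S(2) vs'(2)
    by (meson Un_least not_le)
  then obtain v where v: "v \<in> Z2vecs n" "v \<notin> ?V"
    by blast
  have "v \<notin> z2.span (set vs)"
    using v(2) z2.span_mono[of "set vs" "S (l + 1) \<union> set vs"] by blast
  then have "z2.independent (insert v (set vs))" "v \<notin> set vs"
    using vs'(3) z2.independent_insertI z2.span_base by blast+
  moreover have "z2.span (insert v (set vs)) \<inter> S (l + 1) = {0}"
    using v(2) vs'(4) by (intro span_insert_inter_eq_zero) (simp_all add: Un_commute)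
  ultimately show ?thesis
    using that[of v] v(1) vs unfolding indep_tuples_def by auto
qed

lemma indep_tuples_nonempty:
  assumes "z2.subspace (S (l + 1))" "S (l + 1) \<subseteq> Z2vecs n" "z2.dim (S (l + 1)) + s \<le> n"
  shows "indep_tuples n S l s \<noteq> {}"
proof -
  have "k \<le> s \<Longrightarrow> indep_tuples n S l k \<noteq> {}" for k
  proof (induction k)
    case 0
    have "[] \<in> indep_tuples n S l 0"
      using z2.subspace_0[OF assms(1)] z2.independent_empty unfolding indep_tuples_def by auto
    then show ?case by blast
  next
    case (Suc k)
    then obtain vs where "vs \<in> indep_tuples n S l k"
      by auto
    moreover have "z2.dim (S (l + 1)) + k < n"
      using Suc.prems assms(3) by simp
    ultimately show ?case
      using indep_tuple_extend[where S = S and l = l, OF assms(1,2)] by blast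
  qed
  then show ?thesis by simp
qed

section \<open>Linear involutions fixing a subspace\<close>

definition linear_involution_fixing ::
    "nat \<Rightarrow> (nat \<Rightarrow> bit) set \<Rightarrow> ((nat \<Rightarrow> bit) \<Rightarrow> (nat \<Rightarrow> bit)) \<Rightarrow> bool" where
  "linear_involution_fixing n S g \<longleftrightarrow> module_hom z2scale z2scale g \<and> (\<forall>z. g (g z) = z) \<and>
     (\<forall>v\<in>S. g v = v) \<and> g ` Z2vecs n \<subseteq> Z2vecs n"

lemma functional_vanishing_on_subspace:
  assumes S: "z2.subspace S" and x: "x \<notin> S" and y: "y \<notin> S"
  obtains \<phi> :: "(nat \<Rightarrow> bit) \<Rightarrow> bit"
  where "Vector_Spaces.linear z2scale (*) \<phi>" "\<forall>v\<in>S. \<phi> v = 0" "\<phi> x = 1" "\<phi> y = 1"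
proof -
  obtain B where B: "B \<subseteq> S" "z2.independent B" "S \<subseteq> z2.span B" "card B = z2.dim S"
    by (rule z2.basis_exists)
  have span_B: "z2.span B = S"
    using B S by (meson z2.span_minimal subset_antisym)
  have "z2.independent (insert x B)"
    using B(2) x span_B by (simp add: z2.independent_insertI)
  then obtain C where C: "insert x B \<subseteq> C" "C \<subseteq> insert y (insert x B)" "z2.independent C"
      "insert y (insert x B) \<subseteq> z2.span C"
    using z2.maximal_independent_subset_extend[of "insert x B" "insert y (insert x B)"] by blast
  obtain \<phi> where \<phi>: "Vector_Spaces.linear z2scale (*) \<phi>" "\<forall>v\<in>C. \<phi> v = (if v \<in> B then 0 else 1)"
    using z2_bit.linear_independent_extend[OF C(3), of "\<lambda>v. if v \<in> B then 0 else 1"] by blast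
  have "\<forall>v\<in>B. \<phi> v = 0"
    using \<phi>(2) C(1) by auto
  then have vanish: "\<forall>v\<in>S. \<phi> v = 0"
    using z2_bit.linear_eq_0_on_span[OF \<phi>(1)] span_B by blast
  have "x \<notin> B" "y \<notin> B"
    using x y B(1) by blast+
  then have \<phi>x: "\<phi> x = 1"
    using \<phi>(2) C(1) by simp
  have "\<phi> y = 1"
  proof (cases "y \<in> C")
    case True
    then show ?thesis using \<phi>(2) \<open>y \<notin> B\<close> by simp
  next
    case False
    then have "y \<in> z2.span (insert x B)"
      using C(2,4) z2.span_mono[of C "insert x B"] by blast
    then obtain k where k: "y - z2scale k x \<in> S"
      unfolding z2.span_insert span_B by blast
    have "k \<noteq> 0"
    proof
      assume "k = 0"
      with k y show False by simp
    qed
    then have "\<phi> (y - x) = 0" using vanish k by simp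
    then show ?thesis
      using \<phi>x z2_bit.linear_diff[OF \<phi>(1)] by (simp add: algebra_simps)
  qed
  with \<phi>(1) vanish \<phi>x show ?thesis by (rule that)
qed

lemma linear_involution_fixing_transitive:
  assumes S: "z2.subspace S" and x: "x \<in> Z2vecs n - S" and y: "y \<in> Z2vecs n - S"
  obtains g where "linear_involution_fixing n S g" "g x = y"
proof -
  obtain \<phi> where \<phi>: "Vector_Spaces.linear z2scale (*) \<phi>" "\<forall>v\<in>S. \<phi> v = 0" "\<phi> x = 1" "\<phi> y = 1"
    using functional_vanishing_on_subspace[OF S] x y by blast
  have add: "\<phi> (a + b) = \<phi> a + \<phi> b" for a b
    using z2_bit.linear_add[OF \<phi>(1)] by simp
  have scale: "\<phi> (z2scale c a) = c * \<phi> a" for c a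
    using z2_bit.linear_scale[OF \<phi>(1)] by simp
  define g where "g z = z + z2scale (\<phi> z) (x + y)" for z
  have "module_hom z2scale z2scale g"
    unfolding module_hom_iff
  proof (intro conjI allI)
    fix a b :: "nat \<Rightarrow> bit" and c :: bit
    show "g (a + b) = g a + g b"
      unfolding g_def add z2.scale_left_distrib by (simp add: algebra_simps)
    show "g (z2scale c a) = z2scale c (g a)"
      unfolding g_def scale z2.scale_right_distrib z2.scale_scale by simp
  qed (rule z2.module_axioms)+
  moreover have "g (g z) = z" for z
  proof -
    have "\<phi> (x + y) = 0"
      using add \<phi> by simp
    then have "\<phi> (g z) = \<phi> z"
      by (simp add: g_def add scale)
    then have "g (g z) = g z + z2scale (\<phi> z) (x + y)"
      by (simp only: g_def[of "g z"])
    also have "\<dots> = z"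
      by (simp add: g_def add.assoc)
    finally show ?thesis .
  qed
  moreover have "\<forall>v\<in>S. g v = v"
    using \<phi>(2) by (simp add: g_def)
  moreover have "g ` Z2vecs n \<subseteq> Z2vecs n"
    using x y by (auto simp: g_def Z2vecs_def z2scale_def)
  moreover have "g x = y"
    using \<phi>(3) by (simp add: g_def add.assoc[symmetric])
  ultimately show ?thesis
    using that unfolding linear_involution_fixing_def by blast
qed

lemma inj_linear_involution_fixing:
  assumes "linear_involution_fixing n S g"
  shows "inj g"
proof (rule injI)
  fix a b assume "g a = g b"
  then have "g (g a) = g (g b)" by simp
  then show "a = b" using assms unfolding linear_involution_fixing_def by simp
qed

lemma image_span_Un_fixed:
  assumes "linear_involution_fixing n S g"
  shows "g ` z2.span (S \<union> X) = z2.span (S \<union> g ` X)"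
proof -
  interpret module_hom z2scale z2scale g
    using assms unfolding linear_involution_fixing_def by blast
  have "g ` (S \<union> X) = S \<union> g ` X"
    using assms unfolding linear_involution_fixing_def by force
  then show ?thesis using span_image[of "S \<union> X"] by simp
qed

lemma map_indep_tuples:
  assumes g: "linear_involution_fixing n (S (l + 1)) g" and vs: "vs \<in> indep_tuples n S l s"
  shows "map g vs \<in> indep_tuples n S l s"
proof -
  interpret module_hom z2scale z2scale g
    using g unfolding linear_involution_fixing_def by blast
  have inj: "inj_on g A" for A
    using inj_linear_involution_fixing[OF g] by (rule inj_on_subset) simp
  have closed: "g ` Z2vecs n \<subseteq> Z2vecs n"
    using g unfolding linear_involution_fixing_def by blast
  have vs': "length vs = s" "distinct vs" "set vs \<subseteq> Z2vecs n" "z2.independent (set vs)"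
      "z2.span (set vs) \<inter> S (l + 1) = {0}"
    using vs unfolding indep_tuples_def by auto
  have "w = 0" if w: "w \<in> z2.span (set (map g vs))" "w \<in> S (l + 1)" for w
  proof -
    obtain u where u: "u \<in> z2.span (set vs)" "w = g u"
      using w(1) span_image[of "set vs"] by auto
    have "u = g w"
      using u(2) g unfolding linear_involution_fixing_def by simp
    also have "\<dots> = w"
      using w(2) g unfolding linear_involution_fixing_def by simp
    finally show ?thesis
      using u(1) w(2) vs'(5) by blast
  qed
  moreover have "0 \<in> S (l + 1)"
    using vs'(5) by blast
  ultimately have "z2.span (set (map g vs)) \<inter> S (l + 1) = {0}"
    using z2.span_zero[of "set (map g vs)"] by blast
  moreover have "set (map g vs) \<subseteq> Z2vecs n"
    using order_trans[OF image_mono[OF vs'(3)] closed] by simp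
  moreover have "z2.independent (set (map g vs))"
    using independent_injective_image[OF vs'(4) inj] by simp
  ultimately show ?thesis
    using vs'(1,2) inj unfolding indep_tuples_def by (simp add: distinct_map)
qed

(* \<Omega> is a finite sample space and \<tau> \<omega> the tuple (v_1, ..., v_s) drawn at \<omega>; for the
   distribution (a), \<Omega> consists of the lists of m tuples and \<tau> selects the i-th one. *)
definition invariant_under_fixing_involutions ::
    "nat \<Rightarrow> (nat \<Rightarrow> bit) set \<Rightarrow> 'w set \<Rightarrow> ('w \<Rightarrow> (nat \<Rightarrow> bit) list) \<Rightarrow> bool" where
  "invariant_under_fixing_involutions n S \<Omega> \<tau> \<longleftrightarrow>
     (\<forall>g. linear_involution_fixing n S g \<longrightarrow>
        (\<exists>\<sigma>. \<sigma> ` \<Omega> \<subseteq> \<Omega> \<and> inj_on \<sigma> \<Omega> \<and> (\<forall>\<omega>\<in>\<Omega>. \<tau> (\<sigma> \<omega>) = map g (\<tau> \<omega>))))"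

lemma invariant_indep_tuples:
  "invariant_under_fixing_involutions n (S (l + 1)) (indep_tuples n S l s) (\<lambda>vs. vs)"
  unfolding invariant_under_fixing_involutions_def
proof (intro allI impI exI[of _ "map g" for g] conjI)
  fix g assume g: "linear_involution_fixing n (S (l + 1)) g"
  show "map g ` indep_tuples n S l s \<subseteq> indep_tuples n S l s"
    using map_indep_tuples[where S = S and l = l, OF g] by blast
  show "inj_on (map g) (indep_tuples n S l s)"
    using inj_linear_involution_fixing[OF g] by (simp add: inj_on_def inj_def)
qed simp

lemma invariant_indep_tuple_lists:
  assumes "i < m"
  shows "invariant_under_fixing_involutions n (S (l + 1))
           {vss. length vss = m \<and> set vss \<subseteq> indep_tuples n S l s} (\<lambda>vss. vss ! i)"
  unfolding invariant_under_fixing_involutions_def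
proof (intro allI impI exI[of _ "map (map g)" for g] conjI)
  fix g assume g: "linear_involution_fixing n (S (l + 1)) g"
  show "map (map g) ` {vss. length vss = m \<and> set vss \<subseteq> indep_tuples n S l s}
      \<subseteq> {vss. length vss = m \<and> set vss \<subseteq> indep_tuples n S l s}"
    using map_indep_tuples[where S = S and l = l, OF g] by (force simp: subset_iff)
  have "inj (map g)"
    using inj_linear_involution_fixing[OF g] by (simp add: inj_on_def inj_def)
  then show "inj_on (map (map g)) {vss. length vss = m \<and> set vss \<subseteq> indep_tuples n S l s}"
    by (simp add: inj_on_def inj_def)
qed (use assms in simp)

lemma real_le_two_div_pow:
  fixes a b d n :: nat
  assumes le: "a * 2 ^ (n - 1) \<le> b * 2 ^ d" and "d \<le> n" "0 < n"
  shows "real a \<le> 2 / 2 ^ (n - d) * real b"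
proof -
  have "d + (n - d) = Suc (n - 1)"
    using assms(2,3) by arith
  then have split: "(2::real) ^ d * 2 ^ (n - d) = 2 * 2 ^ (n - 1)"
    by (metis power_add power_Suc)
  have "real a * 2 ^ (n - 1) * 2 ^ (n - d) \<le> real b * 2 ^ d * 2 ^ (n - d)"
    using of_nat_mono[OF le] by (intro mult_right_mono) simp_all
  then have "real a * 2 ^ (n - d) * 2 ^ (n - 1) \<le> 2 * real b * 2 ^ (n - 1)"
    using split by (simp add: ac_simps)
  then have "real a * 2 ^ (n - d) \<le> 2 * real b"
    by (rule mult_right_le_imp_le) simp
  then show ?thesis
    by (simp add: field_simps)
qed

lemma card_spanning_le_of_invariant:
  assumes S: "z2.subspace S" and \<Omega>: "finite \<Omega>"
    and inv: "invariant_under_fixing_involutions n S \<Omega> \<tau>"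
    and x: "x \<in> Z2vecs n - S" and y: "y \<in> Z2vecs n - S"
  shows "card {\<omega>\<in>\<Omega>. x \<in> z2.span (S \<union> set (\<tau> \<omega>))} \<le> card {\<omega>\<in>\<Omega>. y \<in> z2.span (S \<union> set (\<tau> \<omega>))}"
proof -
  obtain g where g: "linear_involution_fixing n S g" "g x = y"
    using linear_involution_fixing_transitive[OF S x y] .
  obtain \<sigma> where \<sigma>: "\<sigma> ` \<Omega> \<subseteq> \<Omega>" "inj_on \<sigma> \<Omega>" "\<forall>\<omega>\<in>\<Omega>. \<tau> (\<sigma> \<omega>) = map g (\<tau> \<omega>)"
    using inv g(1) unfolding invariant_under_fixing_involutions_def by blast
  have "\<sigma> ` {\<omega>\<in>\<Omega>. x \<in> z2.span (S \<union> set (\<tau> \<omega>))} \<subseteq> {\<omega>\<in>\<Omega>. y \<in> z2.span (S \<union> set (\<tau> \<omega>))}"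
  proof clarify
    fix \<omega> assume \<omega>: "\<omega> \<in> \<Omega>" "x \<in> z2.span (S \<union> set (\<tau> \<omega>))"
    have "y \<in> g ` z2.span (S \<union> set (\<tau> \<omega>))"
      using \<omega>(2) g(2) by blast
    then show "\<sigma> \<omega> \<in> \<Omega> \<and> y \<in> z2.span (S \<union> set (\<tau> (\<sigma> \<omega>)))"
      using image_span_Un_fixed[OF g(1)] \<sigma> \<omega>(1) by auto
  qed
  moreover have "inj_on \<sigma> {\<omega>\<in>\<Omega>. x \<in> z2.span (S \<union> set (\<tau> \<omega>))}"
    using \<sigma>(2) by (rule inj_on_subset) blast
  ultimately show ?thesis
    using \<Omega> by (intro card_inj_on_le) auto
qed

(* Double counting of the pairs (y, \<omega>) with y \<in> span (S \<union> \<tau> \<omega>) - S: by invariance,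
   every such y is contained in at least as many spans as x. *)
lemma card_spanning_mult_le:
  assumes S: "z2.subspace S" "S \<subseteq> Z2vecs n"
    and \<Omega>: "finite \<Omega>" "\<forall>\<omega>\<in>\<Omega>. set (\<tau> \<omega>) \<subseteq> Z2vecs n \<and> length (\<tau> \<omega>) = s"
    and inv: "invariant_under_fixing_involutions n S \<Omega> \<tau>"
    and x: "x \<in> Z2vecs n - S"
  shows "card {\<omega>\<in>\<Omega>. x \<in> z2.span (S \<union> set (\<tau> \<omega>))} * card (Z2vecs n - S)
           \<le> card \<Omega> * 2 ^ (z2.dim S + s)"
proof -
  let ?Y = "Z2vecs n - S" and ?R = "\<lambda>y \<omega>. y \<in> z2.span (S \<union> set (\<tau> \<omega>))"
  have finY: "finite ?Y"
    using finite_Z2vecs by simp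
  have "card {\<omega>\<in>\<Omega>. ?R x \<omega>} * card ?Y \<le> (\<Sum>y\<in>?Y. card {\<omega>\<in>\<Omega>. ?R y \<omega>})"
    using sum_bounded_below[of ?Y "card {\<omega>\<in>\<Omega>. ?R x \<omega>}"]
      card_spanning_le_of_invariant[OF S(1) \<Omega>(1) inv x] by (simp add: mult.commute)
  also have "\<dots> = (\<Sum>\<omega>\<in>\<Omega>. card {y\<in>?Y. ?R y \<omega>})"
    by (rule sum_multicount_gen[symmetric]) (use finY \<Omega>(1) in auto)
  also have "\<dots> \<le> (\<Sum>\<omega>\<in>\<Omega>. 2 ^ (z2.dim S + s))"
  proof (rule sum_mono)
    fix \<omega> assume \<omega>: "\<omega> \<in> \<Omega>"
    have "S \<union> set (\<tau> \<omega>) \<subseteq> Z2vecs n"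
      using S(2) \<Omega>(2) \<omega> by blast
    then have "card {y\<in>?Y. ?R y \<omega>} \<le> card (z2.span (S \<union> set (\<tau> \<omega>)))"
      by (intro card_mono) (auto intro: finite_subset[OF span_subset_Z2vecs finite_Z2vecs])
    also have "\<dots> \<le> 2 ^ (z2.dim S + card (set (\<tau> \<omega>)))"
      using S finite_subset[OF S(2) finite_Z2vecs] by (intro card_span_Un_le) auto
    also have "\<dots> \<le> 2 ^ (z2.dim S + s)"
      using card_length[of "\<tau> \<omega>"] \<Omega>(2) \<omega> by (intro power_increasing) auto
    finally show "card {y\<in>?Y. ?R y \<omega>} \<le> 2 ^ (z2.dim S + s)" .
  qed
  finally show ?thesis by simp
qed

locale subspace_chain =
  fixes n r s l :: nat and S :: "nat \<Rightarrow> (nat \<Rightarrow> bit) set"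
  assumes s_pos: "0 < s" and dims_le: "r + s + l \<le> n"
    and subspace_S: "\<And>j. j \<in> {1..l + 1} \<Longrightarrow> z2.subspace (S j)"
    and S_subset_Z2vecs: "\<And>j. j \<in> {1..l + 1} \<Longrightarrow> S j \<subseteq> Z2vecs n"
    and dim_top: "z2.dim (S (l + 1)) = r + l"
    and S_mono: "\<And>j. j \<in> {1..l} \<Longrightarrow> S j \<subseteq> S (j + 1)"
begin

lemma S_subset_top:
  assumes "j \<in> {1..l + 1}"
  shows "S j \<subseteq> S (l + 1)"
proof -
  have "j \<le> l + 1" using assms by simp
  then show ?thesis
  proof (induction rule: inc_induct)
    case (step k)
    then show ?case using assms S_mono[of k] by auto
  qed simp
qed

lemma Tsp_ne_S_imp:
  assumes vs: "vs \<in> indep_tuples n S l s" and j: "j \<in> {1..l + 1}"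
    and ne: "(x \<in> Tsp S vs j) \<noteq> (x \<in> S j)"
  shows "x \<notin> S (l + 1)" "x \<in> z2.span (S (l + 1) \<union> set vs)"
proof -
  have x: "x \<in> Tsp S vs j" "x \<notin> S j"
    using ne z2.span_superset[of "S j \<union> set vs"] unfolding Tsp_def by blast+
  have span_S: "z2.span (S j) = S j"
    using subspace_S[OF j] by (simp add: z2.span_eq_iff)
  obtain a b where ab: "a \<in> S j" "b \<in> z2.span (set vs)" "x = a + b"
    using x(1) unfolding Tsp_def z2.span_Un span_S by blast
  show "x \<notin> S (l + 1)"
  proof
    assume "x \<in> S (l + 1)"
    then have "x - a \<in> S (l + 1)"
      using ab(1) S_subset_top[OF j] subspace_S[of "l + 1"] z2.subspace_diff by auto
    then have "b = 0"
      using ab vs unfolding indep_tuples_def by auto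
    then show False using ab x(2) by simp
  qed
  show "x \<in> z2.span (S (l + 1) \<union> set vs)"
    using x(1) S_subset_top[OF j] unfolding Tsp_def by (meson Un_mono order_refl subsetD z2.span_mono)
qed

lemma card_Tsp_ne_S_le:
  assumes \<Omega>: "finite \<Omega>" "\<forall>\<omega>\<in>\<Omega>. \<tau> \<omega> \<in> indep_tuples n S l s"
    and inv: "invariant_under_fixing_involutions n (S (l + 1)) \<Omega> \<tau>"
    and x: "x \<in> Z2vecs n" and j: "j \<in> {1..l + 1}"
  shows "real (card {\<omega>\<in>\<Omega>. (x \<in> Tsp S (\<tau> \<omega>) j) \<noteq> (x \<in> S j)})
           \<le> 2 / 2 ^ (n - r - s - l) * real (card \<Omega>)"
proof (cases "x \<in> S (l + 1)")
  case True
  then have empty: "{\<omega>\<in>\<Omega>. (x \<in> Tsp S (\<tau> \<omega>) j) \<noteq> (x \<in> S j)} = {}"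
    using Tsp_ne_S_imp(1) \<Omega>(2) j by blast
  show ?thesis
    unfolding empty by simp
next
  case False
  let ?D = "{\<omega>\<in>\<Omega>. (x \<in> Tsp S (\<tau> \<omega>) j) \<noteq> (x \<in> S j)}"
    and ?P = "{\<omega>\<in>\<Omega>. x \<in> z2.span (S (l + 1) \<union> set (\<tau> \<omega>))}"
    and ?Y = "Z2vecs n - S (l + 1)"
  have top: "z2.subspace (S (l + 1))" "S (l + 1) \<subseteq> Z2vecs n"
    using subspace_S S_subset_Z2vecs by auto
  have tuples: "\<forall>\<omega>\<in>\<Omega>. set (\<tau> \<omega>) \<subseteq> Z2vecs n \<and> length (\<tau> \<omega>) = s"
    using \<Omega>(2) unfolding indep_tuples_def by auto
  have "card ?D \<le> card ?P"
    using Tsp_ne_S_imp(2) \<Omega> j by (intro card_mono) auto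
  moreover have "2 ^ (n - 1) \<le> card ?Y"
    using card_Z2vecs_Diff_subspace_ge[OF top] dim_top s_pos dims_le by simp
  ultimately have "card ?D * 2 ^ (n - 1) \<le> card ?P * card ?Y"
    by (rule mult_le_mono)
  also have "\<dots> \<le> card \<Omega> * 2 ^ (r + l + s)"
    using card_spanning_mult_le[OF top \<Omega>(1) tuples inv] x False dim_top by simp
  finally have "real (card ?D) \<le> 2 / 2 ^ (n - (r + l + s)) * real (card \<Omega>)"
    using s_pos dims_le by (intro real_le_two_div_pow) auto
  then show ?thesis
    by (simp add: add.commute add.left_commute)
qed

end

section \<open>Quantum query algorithms\<close>

type_synonym oracle_fun = "nat \<times> nat \<Rightarrow> (nat \<Rightarrow> bit) \<Rightarrow> bool"

definition state_norm :: "label set \<Rightarrow> (label \<Rightarrow> complex) \<Rightarrow> real" where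
  "state_norm B \<psi> = L2_set (\<lambda>z. cmod (\<psi> z)) B"

lemma state_norm_sq: "(state_norm B \<psi>)\<^sup>2 = (\<Sum>z\<in>B. (cmod (\<psi> z))\<^sup>2)"
  unfolding state_norm_def L2_set_def by (simp add: sum_nonneg)

lemma state_norm_nonneg: "0 \<le> state_norm B \<psi>"
  unfolding state_norm_def by simp

lemma state_norm_eqI:
  "(\<Sum>z\<in>B. (cmod (\<psi> z))\<^sup>2) = (\<Sum>z\<in>B. (cmod (\<phi> z))\<^sup>2) \<Longrightarrow> state_norm B \<psi> = state_norm B \<phi>"
  unfolding state_norm_def L2_set_def by simp

lemma state_norm_add_le: "state_norm B (\<lambda>z. a z + b z) \<le> state_norm B a + state_norm B b"
proof -
  have "state_norm B (\<lambda>z. a z + b z) \<le> L2_set (\<lambda>z. cmod (a z) + cmod (b z)) B"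
    unfolding state_norm_def by (rule L2_set_mono) (auto simp: norm_triangle_ineq)
  also have "\<dots> \<le> state_norm B a + state_norm B b"
    unfolding state_norm_def by (rule L2_set_triangle_ineq)
  finally show ?thesis .
qed

lemma state_norm_apply_op:
  assumes U: "unitary_on B U" and fin: "finite B"
  shows "state_norm B (apply_op B U \<psi>) = state_norm B \<psi>"
proof (rule state_norm_eqI)
  have "complex_of_real (\<Sum>y\<in>B. (cmod (apply_op B U \<psi> y))\<^sup>2)
      = (\<Sum>y\<in>B. \<Sum>x\<in>B. \<Sum>x'\<in>B. \<psi> x * cnj (\<psi> x') * (U y x * cnj (U y x')))"
    unfolding apply_op_def of_real_sum complex_norm_square cnj_sum complex_cnj_mult sum_product
    by (intro sum.cong refl) (simp add: mult_ac)
  also have "\<dots> = (\<Sum>x\<in>B. \<Sum>x'\<in>B. \<psi> x * cnj (\<psi> x') * (\<Sum>y\<in>B. U y x * cnj (U y x')))"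
    by (subst sum.swap, rule sum.cong[OF refl], subst sum.swap) (simp add: sum_distrib_left)
  also have "\<dots> = (\<Sum>x\<in>B. \<Sum>x'\<in>B. \<psi> x * cnj (\<psi> x') * (if x' = x then 1 else 0))"
  proof (intro sum.cong refl)
    fix x x' assume "x \<in> B" "x' \<in> B"
    then have "cnj (\<Sum>y\<in>B. cnj (U y x) * U y x') = (if x' = x then 1 else 0)"
      using U unfolding unitary_on_def by auto
    then show "\<psi> x * cnj (\<psi> x') * (\<Sum>y\<in>B. U y x * cnj (U y x'))
        = \<psi> x * cnj (\<psi> x') * (if x' = x then 1 else 0)"
      by (simp add: mult.commute)
  qed
  also have "\<dots> = complex_of_real (\<Sum>x\<in>B. (cmod (\<psi> x))\<^sup>2)"
    using fin unfolding of_real_sum complex_norm_square by (simp add: if_distrib cong: if_cong)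
  finally show "(\<Sum>y\<in>B. (cmod (apply_op B U \<psi> y))\<^sup>2) = (\<Sum>x\<in>B. (cmod (\<psi> x))\<^sup>2)"
    using of_real_eq_iff by blast
qed

lemma apply_op_diff: "apply_op B U \<psi> y - apply_op B U \<phi> y = apply_op B U (\<lambda>z. \<psi> z - \<phi> z) y"
  by (simp add: apply_op_def sum_subtractf right_diff_distrib)

definition answer_flip :: "label \<Rightarrow> label" where
  "answer_flip z = (case z of (ij, x, b, w) \<Rightarrow> (ij, x, \<not> b, w))"

definition query_label :: "oracle_fun \<Rightarrow> label \<Rightarrow> label" where
  "query_label f z = (case z of (ij, x, b, w) \<Rightarrow> (ij, x, b \<noteq> f ij x, w))"

definition flip_closed :: "label set \<Rightarrow> bool" where
  "flip_closed B \<longleftrightarrow> (\<forall>z\<in>B. answer_flip z \<in> B)"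

definition oracles_differ_at :: "oracle_fun \<Rightarrow> oracle_fun \<Rightarrow> label \<Rightarrow> bool" where
  "oracles_differ_at f g z \<longleftrightarrow> (case z of (ij, x, _) \<Rightarrow> f ij x \<noteq> g ij x)"

lemma oracle_op_eq: "oracle_op f \<psi> z = \<psi> (query_label f z)"
  by (cases z) (simp add: oracle_op_def query_label_def)

lemma query_label_query_label [simp]: "query_label f (query_label f z) = z"
  by (cases z) (auto simp: query_label_def)

lemma answer_flip_answer_flip [simp]: "answer_flip (answer_flip z) = z"
  by (cases z) (simp add: answer_flip_def)

lemma query_label_in:
  assumes "flip_closed B" "z \<in> B"
  shows "query_label f z \<in> B"
proof -
  have "query_label f z \<in> {z, answer_flip z}"
    by (cases z, cases "f (fst z) (fst (snd z))") (simp_all add: query_label_def answer_flip_def)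
  then show ?thesis
    using assms unfolding flip_closed_def by auto
qed

lemma oracles_differ_at_answer_flip: "oracles_differ_at f g (answer_flip z) = oracles_differ_at f g z"
  by (cases z) (simp add: oracles_differ_at_def answer_flip_def)

lemma sum_answer_flip: "flip_closed B \<Longrightarrow> (\<Sum>z\<in>B. h (answer_flip z)) = (\<Sum>z\<in>B. h z)"
  by (rule sum.reindex_bij_witness[of _ answer_flip answer_flip]) (auto simp: flip_closed_def)

lemma state_norm_oracle_op: "flip_closed B \<Longrightarrow> state_norm B (oracle_op f \<psi>) = state_norm B \<psi>"
  by (rule state_norm_eqI, unfold oracle_op_eq)
    (rule sum.reindex_bij_witness[of _ "query_label f" "query_label f"]; simp add: query_label_in)

lemma norm_diff_sq_le: "(cmod (a - b))\<^sup>2 \<le> 2 * (cmod a)\<^sup>2 + 2 * (cmod b)\<^sup>2"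
proof -
  have "(cmod (a - b))\<^sup>2 \<le> (cmod a + cmod b)\<^sup>2"
    by (simp add: power_mono norm_triangle_ineq4)
  also have "\<dots> \<le> 2 * (cmod a)\<^sup>2 + 2 * (cmod b)\<^sup>2"
    using zero_le_power2[of "cmod a - cmod b"] by (simp add: power2_sum power2_diff)
  finally show ?thesis .
qed

lemma query_label_diff_sq_le:
  "(cmod (\<psi> (query_label f z) - \<psi> (query_label g z)))\<^sup>2 \<le>
     (if oracles_differ_at f g z then 2 * (cmod (\<psi> z))\<^sup>2 + 2 * (cmod (\<psi> (answer_flip z)))\<^sup>2 else 0)"
proof (cases "oracles_differ_at f g z")
  case True
  then have "{query_label f z, query_label g z} = {z, answer_flip z}"
    by (cases z) (auto simp: oracles_differ_at_def query_label_def answer_flip_def)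
  then show ?thesis
    using True norm_diff_sq_le[of "\<psi> z" "\<psi> (answer_flip z)"] norm_diff_sq_le[of "\<psi> (answer_flip z)" "\<psi> z"]
    by (auto simp: doubleton_eq_iff)
next
  case False
  then show ?thesis by (cases z) (simp add: oracles_differ_at_def query_label_def)
qed

lemma state_norm_oracle_op_diff_sq:
  assumes "flip_closed B"
  shows "(state_norm B (\<lambda>z. oracle_op f \<psi> z - oracle_op g \<psi> z))\<^sup>2 \<le>
     4 * (\<Sum>z\<in>B. if oracles_differ_at f g z then (cmod (\<psi> z))\<^sup>2 else 0)"
proof -
  let ?d = "\<lambda>z. if oracles_differ_at f g z then 2 * (cmod (\<psi> z))\<^sup>2 else 0"
  have "(state_norm B (\<lambda>z. oracle_op f \<psi> z - oracle_op g \<psi> z))\<^sup>2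
      \<le> (\<Sum>z\<in>B. ?d z + ?d (answer_flip z))"
    unfolding state_norm_sq oracle_op_eq
    by (intro sum_mono order_trans[OF query_label_diff_sq_le])
      (simp add: oracles_differ_at_answer_flip)
  also have "\<dots> = 2 * (\<Sum>z\<in>B. ?d z)"
    unfolding sum.distrib sum_answer_flip[OF assms, of ?d] by simp
  also have "(\<Sum>z\<in>B. ?d z) = 2 * (\<Sum>z\<in>B. if oracles_differ_at f g z then (cmod (\<psi> z))\<^sup>2 else 0)"
    by (simp add: sum_distrib_left if_distrib cong: if_cong)
  finally show ?thesis by simp
qed

fun query_states :: "label set \<Rightarrow> oracle_fun \<Rightarrow> (label \<Rightarrow> label \<Rightarrow> complex) list \<Rightarrow>
    (label \<Rightarrow> complex) \<Rightarrow> (label \<Rightarrow> complex) list" where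
  "query_states B g [] \<psi> = []"
| "query_states B g [U] \<psi> = []"
| "query_states B g (U # V # Us) \<psi> =
     apply_op B U \<psi> # query_states B g (V # Us) (oracle_op g (apply_op B U \<psi>))"

lemma length_query_states: "length (query_states B g Us \<psi>) = length Us - 1"
  by (induction B g Us \<psi> rule: query_states.induct) auto

lemma state_norm_run:
  assumes "\<forall>U\<in>set Us. unitary_on B U" "finite B" "flip_closed B"
  shows "state_norm B (run B f Us \<psi>) = state_norm B \<psi>"
  using assms(1)
proof (induction Us arbitrary: \<psi> rule: induct_list012)
  case (3 U V Us)
  then show ?case
    using assms(2,3) by (simp add: state_norm_apply_op state_norm_oracle_op)
qed (simp_all add: state_norm_apply_op assms(2))

lemma state_norm_query_states:
  assumes "\<forall>U\<in>set Us. unitary_on B U" "finite B" "flip_closed B"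
    and "st \<in> set (query_states B g Us \<psi>)"
  shows "state_norm B st = state_norm B \<psi>"
  using assms(1,4)
proof (induction Us arbitrary: \<psi> rule: induct_list012)
  case (3 U V Us)
  then show ?case
    using assms(2,3) by (auto simp: state_norm_apply_op state_norm_oracle_op)
qed simp_all

(* The hybrid argument: g is replaced by f one query at a time. *)
lemma state_norm_run_diff_le:
  assumes "\<forall>U\<in>set Us. unitary_on B U" "finite B" "flip_closed B"
  shows "state_norm B (\<lambda>z. run B f Us \<psi> z - run B g Us \<phi> z) \<le> state_norm B (\<lambda>z. \<psi> z - \<phi> z) +
     (\<Sum>st\<leftarrow>query_states B g Us \<phi>. state_norm B (\<lambda>z. oracle_op f st z - oracle_op g st z))"
  using assms(1)
proof (induction Us arbitrary: \<psi> \<phi> rule: induct_list012)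
  case (2 U)
  then show ?case by (simp add: apply_op_diff state_norm_apply_op assms(2))
next
  case (3 U V Us)
  let ?a = "apply_op B U \<psi>" and ?c = "apply_op B U \<phi>"
  have "state_norm B (\<lambda>z. oracle_op f ?a z - oracle_op f ?c z) = state_norm B (\<lambda>z. \<psi> z - \<phi> z)"
  proof -
    have "(\<lambda>z. oracle_op f ?a z - oracle_op f ?c z) = oracle_op f (apply_op B U (\<lambda>z. \<psi> z - \<phi> z))"
      by (simp add: oracle_op_eq apply_op_diff fun_eq_iff)
    then show ?thesis
      using "3.prems" assms(2,3) by (simp add: state_norm_oracle_op state_norm_apply_op)
  qed
  moreover have "state_norm B (\<lambda>z. oracle_op f ?a z - oracle_op g ?c z)
      \<le> state_norm B (\<lambda>z. oracle_op f ?a z - oracle_op f ?c z)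
        + state_norm B (\<lambda>z. oracle_op f ?c z - oracle_op g ?c z)"
    using state_norm_add_le[of B "\<lambda>z. oracle_op f ?a z - oracle_op f ?c z"
        "\<lambda>z. oracle_op f ?c z - oracle_op g ?c z"] by simp
  ultimately show ?case
    using "3.IH"[of "oracle_op f ?a" "oracle_op g ?c"] "3.prems" by simp
qed simp

lemma accept_prob_diff_le:
  assumes "state_norm B (run B f Us init_state) = 1" "state_norm B (run B g Us init_state) = 1"
  shows "\<bar>accept_prob B f Us - accept_prob B g Us\<bar>
     \<le> 2 * state_norm B (\<lambda>z. run B f Us init_state z - run B g Us init_state z)"
proof -
  define a where "a = run B f Us init_state"
  define c where "c = run B g Us init_state"
  have "\<bar>accept_prob B f Us - accept_prob B g Us\<bar>
     \<le> (\<Sum>z\<in>B. \<bar>(cmod (a z))\<^sup>2 - (cmod (c z))\<^sup>2\<bar>)"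
    unfolding accept_prob_def a_def c_def sum_subtractf[symmetric]
    by (rule order_trans[OF sum_abs sum_mono]) auto
  also have "\<dots> \<le> (\<Sum>z\<in>B. \<bar>cmod (a z - c z)\<bar> * \<bar>cmod (a z) + cmod (c z)\<bar>)"
  proof (rule sum_mono)
    fix z
    have "(cmod (a z))\<^sup>2 - (cmod (c z))\<^sup>2 = (cmod (a z) - cmod (c z)) * (cmod (a z) + cmod (c z))"
      by (simp add: power2_eq_square algebra_simps)
    then have "\<bar>(cmod (a z))\<^sup>2 - (cmod (c z))\<^sup>2\<bar> = \<bar>cmod (a z) - cmod (c z)\<bar> * (cmod (a z) + cmod (c z))"
      by (simp add: abs_mult)
    also have "\<dots> \<le> cmod (a z - c z) * (cmod (a z) + cmod (c z))"
      by (intro mult_right_mono norm_triangle_ineq3) simp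
    finally show "\<bar>(cmod (a z))\<^sup>2 - (cmod (c z))\<^sup>2\<bar> \<le> \<bar>cmod (a z - c z)\<bar> * \<bar>cmod (a z) + cmod (c z)\<bar>"
      by simp
  qed
  also have "\<dots> \<le> state_norm B (\<lambda>z. a z - c z) * L2_set (\<lambda>z. cmod (a z) + cmod (c z)) B"
    unfolding state_norm_def by (rule L2_set_mult_ineq)
  also have "\<dots> \<le> state_norm B (\<lambda>z. a z - c z) * 2"
  proof (rule mult_left_mono)
    have "L2_set (\<lambda>z. cmod (a z) + cmod (c z)) B \<le> state_norm B a + state_norm B c"
      unfolding state_norm_def by (rule L2_set_triangle_ineq)
    then show "L2_set (\<lambda>z. cmod (a z) + cmod (c z)) B \<le> 2"
      using assms unfolding a_def c_def by simp
  qed (rule state_norm_nonneg)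
  finally show ?thesis
    unfolding a_def c_def by (simp add: mult.commute)
qed

lemma accept_prob_diff_le_query_states:
  assumes "\<forall>U\<in>set Us. unitary_on B U" "finite B" "flip_closed B" "state_norm B init_state = 1"
  shows "\<bar>accept_prob B f Us - accept_prob B g Us\<bar>
     \<le> 2 * (\<Sum>st\<leftarrow>query_states B g Us init_state. state_norm B (\<lambda>z. oracle_op f st z - oracle_op g st z))"
proof -
  have "\<bar>accept_prob B f Us - accept_prob B g Us\<bar>
      \<le> 2 * state_norm B (\<lambda>z. run B f Us init_state z - run B g Us init_state z)"
    using accept_prob_diff_le state_norm_run[OF assms(1-3)] assms(4) by simp
  also have "\<dots> \<le> 2 * (\<Sum>st\<leftarrow>query_states B g Us init_state.
      state_norm B (\<lambda>z. oracle_op f st z - oracle_op g st z))"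
    using state_norm_run_diff_le[OF assms(1-3), of f init_state g init_state]
    unfolding state_norm_def by (simp add: L2_set_0')
  finally show ?thesis .
qed

lemma sum_le_sqrt_card_mult_sqrt_sum_squares:
  assumes "\<forall>w\<in>\<Omega>. 0 \<le> x w"
  shows "(\<Sum>w\<in>\<Omega>. x w) \<le> sqrt (real (card \<Omega>)) * sqrt (\<Sum>w\<in>\<Omega>. (x w)\<^sup>2)"
proof -
  have "(\<Sum>w\<in>\<Omega>. x w) = (\<Sum>w\<in>\<Omega>. \<bar>x w\<bar> * \<bar>1\<bar>)"
    using assms by simp
  also have "\<dots> \<le> L2_set x \<Omega> * L2_set (\<lambda>_. 1) \<Omega>"
    by (rule L2_set_mult_ineq)
  finally show ?thesis
    by (simp add: L2_set_constant L2_set_def mult.commute)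
qed

lemma sum_state_norm_oracle_op_diff_le:
  assumes fin: "finite \<Omega>" and closed: "flip_closed B" and st: "state_norm B st = 1"
    and few: "\<forall>z\<in>B. real (card {\<omega>\<in>\<Omega>. oracles_differ_at (F \<omega>) G z}) \<le> p * real (card \<Omega>)"
  shows "(\<Sum>\<omega>\<in>\<Omega>. state_norm B (\<lambda>z. oracle_op (F \<omega>) st z - oracle_op G st z))
           \<le> 2 * real (card \<Omega>) * sqrt p"
proof -
  let ?\<delta> = "\<lambda>\<omega>. state_norm B (\<lambda>z. oracle_op (F \<omega>) st z - oracle_op G st z)"
  have "(\<Sum>\<omega>\<in>\<Omega>. (?\<delta> \<omega>)\<^sup>2)
      \<le> (\<Sum>\<omega>\<in>\<Omega>. 4 * (\<Sum>z\<in>B. if oracles_differ_at (F \<omega>) G z then (cmod (st z))\<^sup>2 else 0))"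
    by (rule sum_mono) (rule state_norm_oracle_op_diff_sq[OF closed])
  also have "\<dots> = 4 * (\<Sum>z\<in>B. \<Sum>\<omega>\<in>\<Omega>. if oracles_differ_at (F \<omega>) G z then (cmod (st z))\<^sup>2 else 0)"
    by (simp add: sum_distrib_left[symmetric] sum.swap[of _ \<Omega>])
  also have "\<dots> = 4 * (\<Sum>z\<in>B. (cmod (st z))\<^sup>2 * real (card {\<omega>\<in>\<Omega>. oracles_differ_at (F \<omega>) G z}))"
    using fin by (simp add: sum.If_cases Int_def conj_commute mult.commute)
  also have "\<dots> \<le> 4 * (\<Sum>z\<in>B. (cmod (st z))\<^sup>2 * (p * real (card \<Omega>)))"
    using few by (intro mult_left_mono sum_mono) auto
  also have "\<dots> = 4 * p * real (card \<Omega>)"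
    using st unfolding sum_distrib_right[symmetric] state_norm_sq[symmetric] by simp
  finally have sq: "(\<Sum>\<omega>\<in>\<Omega>. (?\<delta> \<omega>)\<^sup>2) \<le> 4 * p * real (card \<Omega>)" .
  have "(\<Sum>\<omega>\<in>\<Omega>. ?\<delta> \<omega>) \<le> sqrt (real (card \<Omega>)) * sqrt (\<Sum>\<omega>\<in>\<Omega>. (?\<delta> \<omega>)\<^sup>2)"
    by (rule sum_le_sqrt_card_mult_sqrt_sum_squares) (simp add: state_norm_nonneg)
  also have "\<dots> \<le> sqrt (real (card \<Omega>)) * sqrt (4 * p * real (card \<Omega>))"
    using sq by (intro mult_left_mono real_sqrt_le_mono) auto
  also have "\<dots> = 2 * real (card \<Omega>) * sqrt p"
    by (simp add: real_sqrt_mult)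
  finally show ?thesis .
qed

lemma expectation_accept_prob_diff_le:
  assumes \<Omega>: "finite \<Omega>" "\<Omega> \<noteq> {}" and B: "finite B" "flip_closed B" "state_norm B init_state = 1"
    and U: "\<forall>U\<in>set Us. unitary_on B U" and len: "length Us = q + 1"
    and few: "\<forall>z\<in>B. real (card {\<omega>\<in>\<Omega>. oracles_differ_at (F \<omega>) G z}) \<le> p * real (card \<Omega>)"
  shows "\<bar>measure_pmf.expectation (pmf_of_set \<Omega>) (\<lambda>\<omega>. accept_prob B (F \<omega>) Us) - accept_prob B G Us\<bar>
     \<le> 4 * real q * sqrt p"
proof -
  define N where "N = real (card \<Omega>)"
  have N: "N > 0"
    unfolding N_def using \<Omega> by (simp add: card_gt_0_iff)
  define L where "L = query_states B G Us init_state"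
  define \<delta> where "\<delta> \<omega> st = state_norm B (\<lambda>z. oracle_op (F \<omega>) st z - oracle_op G st z)" for \<omega> st
  have each: "\<bar>accept_prob B (F \<omega>) Us - accept_prob B G Us\<bar> \<le> 2 * (\<Sum>st\<leftarrow>L. \<delta> \<omega> st)" for \<omega>
    unfolding \<delta>_def L_def by (rule accept_prob_diff_le_query_states[OF U B])
  have "\<bar>measure_pmf.expectation (pmf_of_set \<Omega>) (\<lambda>\<omega>. accept_prob B (F \<omega>) Us) - accept_prob B G Us\<bar>
      = \<bar>\<Sum>\<omega>\<in>\<Omega>. accept_prob B (F \<omega>) Us - accept_prob B G Us\<bar> / N"
    using \<Omega> N unfolding N_def by (simp add: integral_pmf_of_set sum_subtractf field_simps)
  also have "\<dots> \<le> (\<Sum>\<omega>\<in>\<Omega>. 2 * (\<Sum>st\<leftarrow>L. \<delta> \<omega> st)) / N"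
    using N each by (intro divide_right_mono order_trans[OF sum_abs sum_mono]) auto
  also have "(\<Sum>\<omega>\<in>\<Omega>. 2 * (\<Sum>st\<leftarrow>L. \<delta> \<omega> st)) = 2 * (\<Sum>st\<leftarrow>L. \<Sum>\<omega>\<in>\<Omega>. \<delta> \<omega> st)"
    by (induction L) (simp_all add: sum.distrib sum_distrib_left)
  also have "(\<Sum>st\<leftarrow>L. \<Sum>\<omega>\<in>\<Omega>. \<delta> \<omega> st) \<le> (\<Sum>st\<leftarrow>L. 2 * N * sqrt p)"
    using sum_state_norm_oracle_op_diff_le[OF \<Omega>(1) B(2) _ few]
      state_norm_query_states[OF U B(1,2)] B(3)
    unfolding \<delta>_def L_def N_def by (intro sum_list_mono) auto
  also have "(\<Sum>st\<leftarrow>L. 2 * N * sqrt p) = real q * (2 * N * sqrt p)"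
    unfolding L_def by (simp add: sum_list_triv length_query_states len)
  finally show ?thesis
    using N by (simp add: field_simps)
qed

section \<open>The two oracle distributions\<close>

lemma finite_qbasis: "finite (qbasis n m l W)"
proof -
  have "qbasis n m l W \<subseteq> ({..<m} \<times> {1..l+1}) \<times> Z2vecs n \<times> (UNIV :: bool set) \<times> {..<W}"
    unfolding qbasis_def by auto
  then show ?thesis
    using finite_Z2vecs finite_subset by fastforce
qed

lemma flip_closed_qbasis: "flip_closed (qbasis n m l W)"
  unfolding flip_closed_def qbasis_def answer_flip_def by auto

lemma state_norm_init_state:
  assumes "1 \<le> m" "1 \<le> W"
  shows "state_norm (qbasis n m l W) init_state = 1"
proof -
  have "((0, 1), 0, False, 0) \<in> qbasis n m l W"
    using assms unfolding qbasis_def Z2vecs_def by auto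
  then have "(\<Sum>z\<in>qbasis n m l W. (cmod (init_state z))\<^sup>2)
      = (\<Sum>z\<in>qbasis n m l W. if z = ((0, 1), 0, False, 0) then 1 else 0)"
    unfolding init_state_def by (intro sum.cong refl) auto
  also have "\<dots> = 1"
    using \<open>((0, 1), 0, False, 0) \<in> qbasis n m l W\<close> finite_qbasis by simp
  finally have "(\<Sum>z\<in>qbasis n m l W. (cmod (init_state z))\<^sup>2) = 1" .
  then show ?thesis
    unfolding state_norm_def L2_set_def by simp
qed

context subspace_chain
begin

lemma card_oracles_differ_at_le:
  assumes \<Omega>: "finite \<Omega>" "\<forall>i<m. \<forall>\<omega>\<in>\<Omega>. \<tau> i \<omega> \<in> indep_tuples n S l s"
    and inv: "\<forall>i<m. invariant_under_fixing_involutions n (S (l + 1)) \<Omega> (\<tau> i)"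
  shows "\<forall>z\<in>qbasis n m l W. real (card {\<omega>\<in>\<Omega>.
     oracles_differ_at (\<lambda>(i, j) x. x \<in> Tsp S (\<tau> i \<omega>) j) (\<lambda>(i, j) x. x \<in> S j) z})
       \<le> 2 / 2 ^ (n - r - s - l) * real (card \<Omega>)"
proof
  fix z assume "z \<in> qbasis n m l W"
  then obtain i j x b w where z: "z = ((i, j), x, b, w)" "i < m" "j \<in> {1..l + 1}" "x \<in> Z2vecs n"
    unfolding qbasis_def by auto
  then show "real (card {\<omega>\<in>\<Omega>. oracles_differ_at (\<lambda>(i, j) x. x \<in> Tsp S (\<tau> i \<omega>) j)
      (\<lambda>(i, j) x. x \<in> S j) z}) \<le> 2 / 2 ^ (n - r - s - l) * real (card \<Omega>)"
    using card_Tsp_ne_S_le[of \<Omega> "\<tau> i"] \<Omega> inv by (simp add: oracles_differ_at_def)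
qed

lemma prob_copies_close:
  assumes "1 \<le> m" "1 \<le> W" "length Us = q + 1" "\<forall>U\<in>set Us. unitary_on (qbasis n m l W) U"
  shows "\<bar>prob_copies n m l s W S Us - accept_prob (qbasis n m l W) (\<lambda>(i, j) x. x \<in> S j) Us\<bar>
           \<le> 4 * real q * sqrt (2 / 2 ^ (n - r - s - l))"
  unfolding prob_copies_def
proof (rule expectation_accept_prob_diff_le)
  show "indep_tuples n S l s \<noteq> {}"
    using subspace_S S_subset_Z2vecs dim_top dims_le by (intro indep_tuples_nonempty) auto
  show "\<forall>z\<in>qbasis n m l W. real (card {vs\<in>indep_tuples n S l s.
     oracles_differ_at (\<lambda>(i, j) x. x \<in> Tsp S vs j) (\<lambda>(i, j) x. x \<in> S j) z})
       \<le> 2 / 2 ^ (n - r - s - l) * real (card (indep_tuples n S l s))"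
    by (rule card_oracles_differ_at_le) (use finite_indep_tuples invariant_indep_tuples in blast)+
qed (use assms in \<open>simp_all add: finite_indep_tuples finite_qbasis flip_closed_qbasis
      state_norm_init_state\<close>)

lemma prob_indep_close:
  assumes "1 \<le> m" "1 \<le> W" "length Us = q + 1" "\<forall>U\<in>set Us. unitary_on (qbasis n m l W) U"
  shows "\<bar>prob_indep n m l s W S Us - accept_prob (qbasis n m l W) (\<lambda>(i, j) x. x \<in> S j) Us\<bar>
           \<le> 4 * real q * sqrt (2 / 2 ^ (n - r - s - l))"
  unfolding prob_indep_def
proof (rule expectation_accept_prob_diff_le)
  let ?\<Omega> = "{vss. length vss = m \<and> set vss \<subseteq> indep_tuples n S l s}"
  show "finite ?\<Omega>"
    using finite_lists_length_eq[OF finite_indep_tuples] by (simp add: conj_commute)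
  obtain vs where "vs \<in> indep_tuples n S l s"
    using subspace_S S_subset_Z2vecs dim_top dims_le indep_tuples_nonempty by fastforce
  then have "replicate m vs \<in> ?\<Omega>"
    by (auto simp: set_replicate_conv_if)
  then show "?\<Omega> \<noteq> {}" by blast
  show "\<forall>z\<in>qbasis n m l W. real (card {vss\<in>?\<Omega>.
     oracles_differ_at (\<lambda>(i, j) x. x \<in> Tsp S (vss ! i) j) (\<lambda>(i, j) x. x \<in> S j) z})
       \<le> 2 / 2 ^ (n - r - s - l) * real (card ?\<Omega>)"
    by (rule card_oracles_differ_at_le)
      (use \<open>finite ?\<Omega>\<close> invariant_indep_tuple_lists in auto)
qed (use assms in \<open>simp_all add: finite_qbasis flip_closed_qbasis state_norm_init_state\<close>)

end

theorem mainTheorem4: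
  shows "\<exists>C::real. \<forall>(n::nat) (r::nat) (s::nat) (l::nat) (m::nat) (q::nat) (W::nat)
      (S :: nat \<Rightarrow> (nat \<Rightarrow> bit) set) (Us :: (label \<Rightarrow> label \<Rightarrow> complex) list).
    0 < n \<longrightarrow> 0 < r \<longrightarrow> 0 < s \<longrightarrow> 0 < l \<longrightarrow> r + s + l \<le> n \<longrightarrow>
    (\<forall>j\<in>{1..l+1}. z2.subspace (S j) \<and> S j \<subseteq> Z2vecs n \<and> z2.dim (S j) = r + j - 1) \<longrightarrow>
    (\<forall>j\<in>{1..l}. S j \<subseteq> S (j + 1)) \<longrightarrow>
    1 \<le> m \<longrightarrow> 1 \<le> W \<longrightarrow>
    length Us = q + 1 \<longrightarrow> (\<forall>U\<in>set Us. unitary_on (qbasis n m l W) U) \<longrightarrow>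
    \<bar>prob_indep n m l s W S Us - prob_copies n m l s W S Us\<bar>
      \<le> C * (real q * real l * real m * real s) / sqrt (2 ^ (n - r - s - l))"
proof (intro exI[of _ "8 * sqrt 2"] allI impI)
  fix n r s l m q W :: nat and S :: "nat \<Rightarrow> (nat \<Rightarrow> bit) set"
    and Us :: "(label \<Rightarrow> label \<Rightarrow> complex) list"
  assume "0 < n" "0 < r" "0 < s" "0 < l" "r + s + l \<le> n"
    and "\<forall>j\<in>{1..l+1}. z2.subspace (S j) \<and> S j \<subseteq> Z2vecs n \<and> z2.dim (S j) = r + j - 1"
    and "\<forall>j\<in>{1..l}. S j \<subseteq> S (j + 1)" and run: "1 \<le> m" "1 \<le> W" "length Us = q + 1"
      "\<forall>U\<in>set Us. unitary_on (qbasis n m l W) U"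
  then interpret subspace_chain n r s l S
    by unfold_locales auto
  have "\<bar>prob_indep n m l s W S Us - prob_copies n m l s W S Us\<bar>
      \<le> 2 * (4 * real q * sqrt (2 / 2 ^ (n - r - s - l)))"
    using prob_indep_close[OF run] prob_copies_close[OF run] by linarith
  also have "\<dots> = 8 * sqrt 2 * real q / sqrt (2 ^ (n - r - s - l))"
    by (simp add: real_sqrt_divide)
  also have "\<dots> \<le> 8 * sqrt 2 * (real q * real l * real m * real s) / sqrt (2 ^ (n - r - s - l))"
  proof -
    have "1 \<le> l * m * s"
      using \<open>0 < l\<close> \<open>0 < s\<close> \<open>1 \<le> m\<close> by simp
    then have "real q * 1 \<le> real q * (real l * real m * real s)"
      by (intro mult_left_mono) (simp_all flip: of_nat_mult)
    then show ?thesis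
      by (intro divide_right_mono mult_left_mono) (simp_all add: mult.assoc)
  qed
  finally show "\<bar>prob_indep n m l s W S Us - prob_copies n m l s W S Us\<bar>
      \<le> 8 * sqrt 2 * (real q * real l * real m * real s) / sqrt (2 ^ (n - r - s - l))" .
qed

end
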